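(* Let $(\mathbf{X},\mathbf{p})$ be a $\{1,k\}$-payment equilibrium. If some agent $i$ is pEF1 towards another agent $j$ but is not $(2-1/k)$-pEFX towards $j$, then $p(X_j)<k$.
   Context: Fix $k>1$. Agents $N$, chores $M$, additive costs $c_i(e)\in\{1,k\}$. An allocation $\mathbf{X}$ partitions $M$ into bundles $X_i$. A payment vector assigns $p(e)>0$, $p(X)=\sum_{e\in X}p(e)$; $\alpha_{i,e}=c_i(e)/p(e)$, $\alpha_i=\min_e\alpha_{i,e}$, $\mathsf{MPB}_i=\{e:\alpha_{i,e}=\alpha_i\}$; $(\mathbf{X},\mathbf{p})$ is a $\{1,k\}$-payment equilibrium if $X_i\subseteq\mathsf{MPB}_i$ for all $i$ and $p(e)\in\{1,k\}$ for all $e$. Agent $i$ is pEF1 towards $j$ if $X_i=\emptyset$ or there is $e\in X_i$ with $p(X_i\setminus\{e\})\le p(X_j)$; $i$ is $\beta$-pEFX towards $j$ if $X_i=\emptyset$ or $p(X_i\setminus\{e\})\le\beta\,p(X_j)$ for all $e\in X_i$. *)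

theory Defs
  imports Main "HOL.Real"
begin

definition is_allocation :: "'a set \<Rightarrow> 'b set \<Rightarrow> ('a \<Rightarrow> 'b set) \<Rightarrow> bool" where
  "is_allocation N M X \<longleftrightarrow>
     (\<forall>i\<in>N. X i \<subseteq> M) \<and>
     (\<forall>i\<in>N. \<forall>j\<in>N. i \<noteq> j \<longrightarrow> X i \<inter> X j = {}) \<and>
     (\<Union>i\<in>N. X i) = M"

definition pay :: "('b \<Rightarrow> real) \<Rightarrow> 'b set \<Rightarrow> real" where
  "pay p S = (\<Sum>e\<in>S. p e)"

definition mpb_ratio :: "('a \<Rightarrow> 'b \<Rightarrow> real) \<Rightarrow> ('b \<Rightarrow> real) \<Rightarrow> 'a \<Rightarrow> 'b \<Rightarrow> real" where
  "mpb_ratio c p i e = c i e / p e"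

definition MPB :: "'b set \<Rightarrow> ('a \<Rightarrow> 'b \<Rightarrow> real) \<Rightarrow> ('b \<Rightarrow> real) \<Rightarrow> 'a \<Rightarrow> 'b set" where
  "MPB M c p i = {e\<in>M. \<forall>e'\<in>M. mpb_ratio c p i e \<le> mpb_ratio c p i e'}"

definition payment_equilibrium_1k ::
  "real \<Rightarrow> 'a set \<Rightarrow> 'b set \<Rightarrow> ('a \<Rightarrow> 'b \<Rightarrow> real) \<Rightarrow> ('a \<Rightarrow> 'b set) \<Rightarrow> ('b \<Rightarrow> real) \<Rightarrow> bool" where
  "payment_equilibrium_1k k N M c X p \<longleftrightarrow>
     is_allocation N M X \<and>
     (\<forall>i\<in>N. X i \<subseteq> MPB M c p i) \<and>
     (\<forall>e\<in>M. p e \<in> {1, k})"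

definition pEF1 :: "('a \<Rightarrow> 'b set) \<Rightarrow> ('b \<Rightarrow> real) \<Rightarrow> 'a \<Rightarrow> 'a \<Rightarrow> bool" where
  "pEF1 X p i j \<longleftrightarrow> X i = {} \<or> (\<exists>e\<in>X i. pay p (X i - {e}) \<le> pay p (X j))"

definition pEFX :: "real \<Rightarrow> ('a \<Rightarrow> 'b set) \<Rightarrow> ('b \<Rightarrow> real) \<Rightarrow> 'a \<Rightarrow> 'a \<Rightarrow> bool" where
  "pEFX \<beta> X p i j \<longleftrightarrow> X i = {} \<or> (\<forall>e\<in>X i. pay p (X i - {e}) \<le> \<beta> * pay p (X j))"

end

theory Submission
  imports Defs
begin

text \<open>If \<open>e\<close> witnesses the failure of \<open>\<beta>\<close>-pEFX and \<open>e'\<close> witnesses pEF1, then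
  \<open>p(X\<^sub>i) - p(e) > \<beta> p(X\<^sub>j)\<close> and \<open>p(X\<^sub>i) - p(e') \<le> p(X\<^sub>j)\<close>, so
  \<open>p(e') - p(e) > (\<beta> - 1) p(X\<^sub>j)\<close>. For \<open>\<beta> = 2 - 1/k\<close> and \<open>p(X\<^sub>j) \<ge> k\<close> the right-hand side
  is at least \<open>k - 1\<close>, which no two payments in \<open>{1, k}\<close> can exceed. Only the payment
  values of the equilibrium are used, not the costs or the MPB condition.\<close>

lemma pay_remove:
  assumes "finite S" and "e \<in> S"
  shows "pay p (S - {e}) = pay p S - p e"
  using assms unfolding pay_def by (simp add: sum_diff1)

lemma pEF1_not_pEFX_payment_gap:
  assumes "finite (X i)" and "pEF1 X p i j" and "\<not> pEFX \<beta> X p i j"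
  obtains e e' where "e \<in> X i" and "e' \<in> X i"
    and "p e' - p e > (\<beta> - 1) * pay p (X j)"
proof -
  obtain e where e: "e \<in> X i" and violated: "pay p (X i - {e}) > \<beta> * pay p (X j)"
    using assms(3) unfolding pEFX_def by force
  obtain e' where e': "e' \<in> X i" and satisfied: "pay p (X i - {e'}) \<le> pay p (X j)"
    using assms(2) e unfolding pEF1_def by blast
  have "p e' - p e = pay p (X i - {e}) - pay p (X i - {e'})"
    using assms(1) e e' by (simp add: pay_remove)
  also have "\<dots> > (\<beta> - 1) * pay p (X j)"
    using violated satisfied by (simp add: algebra_simps)
  finally show thesis using that e e' by blast
qed

lemma payment_difference_le:
  fixes k :: real
  assumes "k > 1" and "a \<in> {1, k}" and "b \<in> {1, k}"
  shows "a - b \<le> k - 1"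
  using assms by auto

theorem lemma7:
  fixes k :: real and N :: "'a set" and M :: "'b set"
    and c :: "'a \<Rightarrow> 'b \<Rightarrow> real" and X :: "'a \<Rightarrow> 'b set" and p :: "'b \<Rightarrow> real"
    and i j :: 'a
  assumes "k > 1"
    and "finite N" and "finite M"
    and "\<forall>a\<in>N. \<forall>e\<in>M. c a e \<in> {1, k}"
    and "payment_equilibrium_1k k N M c X p"
    and "i \<in> N" and "j \<in> N" and "i \<noteq> j"
    and "pEF1 X p i j"
    and "\<not> pEFX (2 - 1 / k) X p i j"
  shows "pay p (X j) < k"
proof (rule ccontr)
  assume "\<not> pay p (X j) < k"
  then have "(1 - 1 / k) * k \<le> (1 - 1 / k) * pay p (X j)"
    using assms(1) by (intro mult_left_mono) auto
  then have large: "k - 1 \<le> (1 - 1 / k) * pay p (X j)"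
    using assms(1) by (simp add: algebra_simps)
  have chores_i: "X i \<subseteq> M" and payments: "\<forall>e\<in>M. p e \<in> {1, k}"
    using assms(5,6) unfolding payment_equilibrium_1k_def is_allocation_def by auto
  then have "finite (X i)"
    using assms(3) finite_subset by blast
  then obtain e e' where "e \<in> X i" "e' \<in> X i"
    and gap: "p e' - p e > (2 - 1 / k - 1) * pay p (X j)"
    using pEF1_not_pEFX_payment_gap assms(9,10) by metis
  then have "p e' - p e \<le> k - 1"
    using payment_difference_le[OF assms(1)] chores_i payments by (meson subsetD)
  with gap large show False by simp
qed

end
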